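(* Let $D$ be a square-free integer, let $\mathbb{Z}[\sqrt{D}]$ denote the ring of integers of $\mathbb{Q}(\sqrt{D})$, and let $p$ be a prime integer which is irreducible but not prime in $\mathbb{Z}[\sqrt{D}]$. For $z\in I_p(D)$, the matrix $A(p,z)$ has property (CZ) if and only if the matrix $A(p,\bar z)$ has property (CZ).
   Context: Here $\mathbb{Z}[\sqrt{D}]=\{a+b\sqrt{D}:a,b\in\mathbb{Z}\}$ if $D\equiv 2,3 \pmod 4$ and $\mathbb{Z}[\sqrt{D}]=\{\frac{a+b\sqrt{D}}{2}:a,b\in\mathbb{Z},\ a\equiv b \pmod 2\}$ if $D\equiv 1\pmod 4$. $\bar z$ denotes the conjugate and $\lVert z\rVert=z\bar z$ the norm. $I_p(D)$ is the set of all non-unit $z\in\mathbb{Z}[\sqrt{D}]$ such that $z\notin\langle p\rangle$ but there exists $m\notin\langle p\rangle$ with $zm\in\langle p\rangle$ (for such $z$, $p$ divides $\lVert z\rVert$). For $z\in I_p(D)$, $A(p,z)=\begin{pmatrix} p & z\\ \bar z & \lVert z\rVert/p\end{pmatrix}$. A matrix $A(p,z)$ has property (CZ) if there exist $a,b,c\in\mathbb{Z}[\sqrt{D}]$ with $a(1-a)=bc$ such that $A(p,z)=\begin{pmatrix} a&b\\ c&1-a\end{pmatrix}\begin{pmatrix}\bar a&\bar c\\ \bar b&1-\bar a\end{pmatrix}$. *)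

theory Defs
  imports "HOL-Analysis.Analysis" "HOL-Computational_Algebra.Squarefree"
begin

text \<open>Elements of Q(sqrt D) are modelled inside the complex numbers, with
  sqrt D realised as the positive real square root if D \<ge> 0 and as
  i * sqrt(-D) if D < 0.\<close>

definition sqrtD :: "int \<Rightarrow> complex" where
  "sqrtD D = (if D \<ge> 0 then complex_of_real (sqrt (real_of_int D))
              else \<i> * complex_of_real (sqrt (real_of_int (- D))))"

definition ZD :: "int \<Rightarrow> complex set" where
  "ZD D = (if D mod 4 = 1
           then {(of_int a + of_int b * sqrtD D) / 2 | a b :: int. a mod 2 = b mod 2}
           else {of_int a + of_int b * sqrtD D | a b :: int. True})"

definition qcnj :: "int \<Rightarrow> complex \<Rightarrow> complex" where
  "qcnj D z = (THE w. \<exists>x y :: rat. z = of_rat x + of_rat y * sqrtD D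
                                   \<and> w = of_rat x - of_rat y * sqrtD D)"

definition qnorm :: "int \<Rightarrow> complex \<Rightarrow> complex" where
  "qnorm D z = z * qcnj D z"

definition unitD :: "int \<Rightarrow> complex \<Rightarrow> bool" where
  "unitD D z \<longleftrightarrow> z \<in> ZD D \<and> (\<exists>w \<in> ZD D. z * w = 1)"

definition dvdD :: "int \<Rightarrow> complex \<Rightarrow> complex \<Rightarrow> bool" where
  "dvdD D a b \<longleftrightarrow> (\<exists>c \<in> ZD D. b = a * c)"

definition irreducibleD :: "int \<Rightarrow> complex \<Rightarrow> bool" where
  "irreducibleD D p \<longleftrightarrow> p \<in> ZD D \<and> p \<noteq> 0 \<and> \<not> unitD D p \<and>
     (\<forall>a \<in> ZD D. \<forall>b \<in> ZD D. p = a * b \<longrightarrow> unitD D a \<or> unitD D b)"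

definition primeD :: "int \<Rightarrow> complex \<Rightarrow> bool" where
  "primeD D p \<longleftrightarrow> p \<in> ZD D \<and> p \<noteq> 0 \<and> \<not> unitD D p \<and>
     (\<forall>a \<in> ZD D. \<forall>b \<in> ZD D. dvdD D p (a * b) \<longrightarrow> dvdD D p a \<or> dvdD D p b)"

definition idealD :: "int \<Rightarrow> complex \<Rightarrow> complex set" where
  "idealD D p = {p * c | c. c \<in> ZD D}"

definition Ip :: "int \<Rightarrow> int \<Rightarrow> complex set" where
  "Ip D p = {z \<in> ZD D. \<not> unitD D z \<and> z \<notin> idealD D (of_int p) \<and>
              (\<exists>m \<in> ZD D. m \<notin> idealD D (of_int p) \<and> z * m \<in> idealD D (of_int p))}"

definition Amat :: "int \<Rightarrow> int \<Rightarrow> complex \<Rightarrow> complex^2^2" where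
  "Amat D p z = vector [vector [of_int p, z], vector [qcnj D z, qnorm D z / of_int p]]"

definition CZ :: "int \<Rightarrow> complex^2^2 \<Rightarrow> bool" where
  "CZ D A \<longleftrightarrow> (\<exists>a \<in> ZD D. \<exists>b \<in> ZD D. \<exists>c \<in> ZD D. a * (1 - a) = b * c \<and>
      A = (vector [vector [a, b], vector [c, 1 - a]] :: complex^2^2) **
          vector [vector [qcnj D a, qcnj D c], vector [qcnj D b, 1 - qcnj D a]])"

end

theory Submission
  imports Defs
begin

text \<open>Since p is prime in \<int> = ZD 1, the hypothesis that p is not prime in ZD D forces
  D \<noteq> 1; a squarefree D \<noteq> 1 is not a rational square, so sqrtD D is irrational. Then
  Galois conjugation is an involutive ring automorphism of \<rat>(sqrt D) that preserves ZD D.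
  Applying it entrywise to a (CZ) factorisation A(p, z) = M M' with M = [[a, b], [c, 1 - a]]
  yields the (CZ) factorisation of A(p, qcnj z) with entries qcnj a, qcnj b, qcnj c; the
  diagonal entries p and N(z)/p are fixed because N(qcnj z) = N(z).\<close>

lemma sqrtD_square: "sqrtD D ^ 2 = of_int D"
proof (cases "D \<ge> 0")
  case True
  then show ?thesis
    by (simp add: sqrtD_def flip: of_real_power)
next
  case False
  then have "complex_of_real (sqrt (real_of_int (- D))) ^ 2 = of_int (- D)"
    by (simp flip: of_real_power)
  then show ?thesis
    using False by (simp add: sqrtD_def power_mult_distrib)
qed

lemma squarefree_rat_square_eq_1:
  fixes q :: rat
  assumes "q ^ 2 = of_int D" and "squarefree D"
  shows "D = 1"
proof -
  obtain a b where q: "quotient_of q = (a, b)" by (cases "quotient_of q")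
  have "b > 0" and "coprime a b" and "q = of_int a / of_int b"
    using q quotient_of_denom_pos quotient_of_coprime quotient_of_div by blast+
  then have "rat_of_int (a ^ 2) = (q * of_int b) ^ 2"
    by simp
  also have "\<dots> = of_int (D * b ^ 2)"
    using assms(1) by (simp add: power_mult_distrib)
  finally have square: "a ^ 2 = D * b ^ 2"
    by (simp only: of_int_eq_iff)
  then have "b ^ 2 dvd a ^ 2" by simp
  moreover have "coprime (a ^ 2) (b ^ 2)" using \<open>coprime a b\<close> by simp
  ultimately have "is_unit (b ^ 2)" using coprime_absorb_right by blast
  then have "b = 1" using \<open>b > 0\<close> by (auto simp: power2_eq_1_iff)
  then have "a ^ 2 dvd D" using square by simp
  then have "is_unit a" using assms(2) squarefreeD by blast
  then have "a ^ 2 = 1" by (metis power2_abs power_one zdvd1_eq)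
  then show ?thesis using square \<open>b = 1\<close> by simp
qed

lemma sqrtD_not_Rats:
  assumes "squarefree D" and "D \<noteq> 1"
  shows "sqrtD D \<notin> \<rat>"
proof
  assume "sqrtD D \<in> \<rat>"
  then obtain q where "sqrtD D = of_rat q" by (auto elim: Rats_cases)
  then have "of_rat (q ^ 2) = (of_rat (of_int D) :: complex)"
    using sqrtD_square[of D] by (simp add: of_rat_power)
  then have "q ^ 2 = of_int D" by (simp only: of_rat_eq_iff)
  then show False using squarefree_rat_square_eq_1 assms by blast
qed

definition QD :: "int \<Rightarrow> complex set" where
  "QD D = {x + y * sqrtD D | x y. x \<in> \<rat> \<and> y \<in> \<rat>}"

lemma QD_I: "x \<in> \<rat> \<Longrightarrow> y \<in> \<rat> \<Longrightarrow> x + y * sqrtD D \<in> QD D"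
  unfolding QD_def by blast

lemma QD_E:
  assumes "u \<in> QD D"
  obtains x y where "x \<in> \<rat>" and "y \<in> \<rat>" and "u = x + y * sqrtD D"
  using assms unfolding QD_def by blast

lemma QD_diff [simp]:
  assumes "u \<in> QD D" and "v \<in> QD D"
  shows "u - v \<in> QD D"
proof -
  obtain x y x' y' where rat: "x \<in> \<rat>" "y \<in> \<rat>" "x' \<in> \<rat>" "y' \<in> \<rat>"
    and "u = x + y * sqrtD D" "v = x' + y' * sqrtD D"
    using assms by (elim QD_E)
  then have "u - v = (x - x') + (y - y') * sqrtD D"
    by (simp add: algebra_simps)
  with rat show ?thesis by (simp add: QD_I)
qed

lemma QD_mult_eq:
  "(x + y * sqrtD D) * (x' + y' * sqrtD D) = (x * x' + of_int D * y * y') + (x * y' + y * x') * sqrtD D"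
  by (simp add: algebra_simps power2_eq_square flip: sqrtD_square)

lemma QD_mult [simp]: "u \<in> QD D \<Longrightarrow> v \<in> QD D \<Longrightarrow> u * v \<in> QD D"
  by (elim QD_E) (simp add: QD_mult_eq QD_I)

lemma QD_one [simp]: "1 \<in> QD D"
  using QD_I [of 1 0 D] by simp

lemma ZD_subset_QD: "ZD D \<subseteq> QD D"
proof
  fix u assume "u \<in> ZD D"
  then obtain a b :: int where
    "u = (if D mod 4 = 1 then of_int a / 2 + of_int b / 2 * sqrtD D else of_int a + of_int b * sqrtD D)"
    unfolding ZD_def by (auto simp: add_divide_distrib split: if_splits)
  then show "u \<in> QD D"
    using QD_I [of "of_int a / 2" "of_int b / 2" D] QD_I [of "of_int a" "of_int b" D] by simp
qed

lemma CZ_Amat_iff: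
  "CZ D (Amat D p z) \<longleftrightarrow>
    (\<exists>a \<in> ZD D. \<exists>b \<in> ZD D. \<exists>c \<in> ZD D. a * (1 - a) = b * c \<and>
      of_int p = a * qcnj D a + b * qcnj D b \<and>
      z = a * qcnj D c + b * (1 - qcnj D a) \<and>
      qcnj D z = c * qcnj D a + (1 - a) * qcnj D b \<and>
      qnorm D z / of_int p = c * qcnj D c + (1 - a) * (1 - qcnj D a))"
  unfolding CZ_def Amat_def
  by (simp add: matrix_matrix_mult_def vec_eq_iff forall_2 sum_2)

text \<open>qcnj is defined by a description that is unique only if the rational coordinates
  w.r.t. 1 and sqrtD D are, hence the irrationality assumption.\<close>

context
  fixes D :: int
  assumes sqrtD_irrational: "sqrtD D \<notin> \<rat>"
begin

lemma QD_coords_unique: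
  assumes "x \<in> \<rat>" "y \<in> \<rat>" "x' \<in> \<rat>" "y' \<in> \<rat>"
    and eq: "x + y * sqrtD D = x' + y' * sqrtD D"
  shows "x = x' \<and> y = y'"
proof (cases "y = y'")
  case True
  with eq show ?thesis by simp
next
  case False
  with eq have "sqrtD D = (x' - x) / (y - y')"
    by (simp add: field_simps)
  moreover have "(x' - x) / (y - y') \<in> \<rat>"
    using assms(1-4) by simp
  ultimately show ?thesis
    using sqrtD_irrational by simp
qed

lemma qcnj_eq:
  assumes "x \<in> \<rat>" and "y \<in> \<rat>"
  shows "qcnj D (x + y * sqrtD D) = x - y * sqrtD D"
proof -
  obtain r s where rs: "x = of_rat r" "y = of_rat s"
    using assms by (auto elim!: Rats_cases)
  show ?thesis
    unfolding qcnj_def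
  proof (rule the_equality)
    fix w
    assume "\<exists>r' s'. x + y * sqrtD D = of_rat r' + of_rat s' * sqrtD D \<and> w = of_rat r' - of_rat s' * sqrtD D"
    then obtain r' s' where "x + y * sqrtD D = of_rat r' + of_rat s' * sqrtD D"
      and "w = of_rat r' - of_rat s' * sqrtD D"
      by blast
    with assms show "w = x - y * sqrtD D"
      using QD_coords_unique [of x y "of_rat r'" "of_rat s'"] by simp
  qed (use rs in blast)
qed

lemma qcnj_in_QD [simp]:
  assumes "u \<in> QD D"
  shows "qcnj D u \<in> QD D"
proof -
  obtain x y where "x \<in> \<rat>" "y \<in> \<rat>" "u = x + y * sqrtD D"
    using assms by (elim QD_E)
  then show ?thesis
    using QD_I [of x "- y" D] by (simp add: qcnj_eq)
qed

lemma qcnj_qcnj [simp]: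
  assumes "u \<in> QD D"
  shows "qcnj D (qcnj D u) = u"
proof -
  obtain x y where "x \<in> \<rat>" "y \<in> \<rat>" "u = x + y * sqrtD D"
    using assms by (elim QD_E)
  then show ?thesis
    using qcnj_eq [of x "- y"] by (simp add: qcnj_eq)
qed

lemma qcnj_one [simp]: "qcnj D 1 = 1"
  using qcnj_eq [of 1 0] by simp

lemma qcnj_add [simp]:
  assumes "u \<in> QD D" and "v \<in> QD D"
  shows "qcnj D (u + v) = qcnj D u + qcnj D v"
proof -
  obtain x y x' y' where rat: "x \<in> \<rat>" "y \<in> \<rat>" "x' \<in> \<rat>" "y' \<in> \<rat>"
    and u: "u = x + y * sqrtD D" and v: "v = x' + y' * sqrtD D"
    using assms by (elim QD_E)
  then have "u + v = (x + x') + (y + y') * sqrtD D"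
    by (simp add: algebra_simps)
  then have "qcnj D (u + v) = (x + x') - (y + y') * sqrtD D"
    using rat by (simp add: qcnj_eq)
  also have "\<dots> = qcnj D u + qcnj D v"
    using rat by (simp add: u v qcnj_eq algebra_simps)
  finally show ?thesis .
qed

lemma qcnj_diff [simp]:
  assumes "u \<in> QD D" and "v \<in> QD D"
  shows "qcnj D (u - v) = qcnj D u - qcnj D v"
proof -
  obtain x y x' y' where rat: "x \<in> \<rat>" "y \<in> \<rat>" "x' \<in> \<rat>" "y' \<in> \<rat>"
    and u: "u = x + y * sqrtD D" and v: "v = x' + y' * sqrtD D"
    using assms by (elim QD_E)
  then have "u - v = (x - x') + (y - y') * sqrtD D"
    by (simp add: algebra_simps)
  then have "qcnj D (u - v) = (x - x') - (y - y') * sqrtD D"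
    using rat by (simp add: qcnj_eq)
  also have "\<dots> = qcnj D u - qcnj D v"
    using rat by (simp add: u v qcnj_eq algebra_simps)
  finally show ?thesis .
qed

lemma qcnj_mult [simp]:
  assumes "u \<in> QD D" and "v \<in> QD D"
  shows "qcnj D (u * v) = qcnj D u * qcnj D v"
proof -
  obtain x y x' y' where rat: "x \<in> \<rat>" "y \<in> \<rat>" "x' \<in> \<rat>" "y' \<in> \<rat>"
    and u: "u = x + y * sqrtD D" and v: "v = x' + y' * sqrtD D"
    using assms by (elim QD_E)
  have "qcnj D (u * v) = (x * x' + of_int D * y * y') - (x * y' + y * x') * sqrtD D"
    using rat by (simp add: u v QD_mult_eq qcnj_eq)
  also have "\<dots> = (x - y * sqrtD D) * (x' - y' * sqrtD D)"
    by (simp add: algebra_simps power2_eq_square flip: sqrtD_square)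
  also have "\<dots> = qcnj D u * qcnj D v"
    using rat by (simp add: u v qcnj_eq)
  finally show ?thesis .
qed

lemma qcnj_in_ZD:
  assumes "u \<in> ZD D"
  shows "qcnj D u \<in> ZD D"
proof (cases "D mod 4 = 1")
  case True
  with assms obtain a b :: int where "a mod 2 = b mod 2"
    and u: "u = of_int a / 2 + of_int b / 2 * sqrtD D"
    unfolding ZD_def by (auto simp: add_divide_distrib)
  moreover have "a mod 2 = (- b) mod 2"
    using \<open>a mod 2 = b mod 2\<close> by presburger
  moreover have "qcnj D u = (of_int a + of_int (- b) * sqrtD D) / 2"
    unfolding u by (subst qcnj_eq) (simp_all add: diff_divide_distrib)
  ultimately show ?thesis
    unfolding ZD_def if_P [OF True] by blast
next
  case False
  with assms obtain a b :: int where u: "u = of_int a + of_int b * sqrtD D"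
    unfolding ZD_def by auto
  then have "qcnj D u = of_int a + of_int (- b) * sqrtD D"
    by (simp add: qcnj_eq)
  then show ?thesis
    unfolding ZD_def if_not_P [OF False] by blast
qed

lemma CZ_Amat_qcnj:
  assumes "z \<in> ZD D" and "CZ D (Amat D p z)"
  shows "CZ D (Amat D p (qcnj D z))"
proof -
  obtain a b c where abc: "a \<in> ZD D" "b \<in> ZD D" "c \<in> ZD D"
    and idem: "a * (1 - a) = b * c"
    and p: "of_int p = a * qcnj D a + b * qcnj D b"
    and z12: "z = a * qcnj D c + b * (1 - qcnj D a)"
    and z21: "qcnj D z = c * qcnj D a + (1 - a) * qcnj D b"
    and z22: "qnorm D z / of_int p = c * qcnj D c + (1 - a) * (1 - qcnj D a)"
    using assms(2) unfolding CZ_Amat_iff by blast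
  have [simp]: "a \<in> QD D" "b \<in> QD D" "c \<in> QD D" "z \<in> QD D"
    using abc assms(1) ZD_subset_QD by blast+
  have "qcnj D a * (1 - qcnj D a) = qcnj D b * qcnj D c"
    using arg_cong [OF idem, of "qcnj D"] by simp
  moreover have "qcnj D z = qcnj D a * c + qcnj D b * (1 - a)"
    using arg_cong [OF z12, of "qcnj D"] by simp
  moreover have "z = qcnj D c * a + (1 - qcnj D a) * b"
    using arg_cong [OF z21, of "qcnj D"] by simp
  moreover have "qnorm D (qcnj D z) = qnorm D z"
    by (simp add: qnorm_def)
  ultimately show ?thesis
    unfolding CZ_Amat_iff using abc p z22
    by (intro bexI [of _ "qcnj D a"] bexI [of _ "qcnj D b"] bexI [of _ "qcnj D c"])
      (simp_all add: qcnj_in_ZD ac_simps)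
qed

lemma CZ_Amat_qcnj_iff:
  assumes "z \<in> ZD D"
  shows "CZ D (Amat D p (qcnj D z)) \<longleftrightarrow> CZ D (Amat D p z)"
proof -
  have "qcnj D (qcnj D z) = z"
    using assms ZD_subset_QD qcnj_qcnj by blast
  then show ?thesis
    using CZ_Amat_qcnj [OF assms] CZ_Amat_qcnj [OF qcnj_in_ZD [OF assms]] by metis
qed

end

lemma ZD_1: "ZD 1 = \<int>"
proof (intro equalityI subsetI)
  fix u
  assume "u \<in> ZD 1"
  then obtain a b :: int where "a mod 2 = b mod 2" and u: "u = (of_int a + of_int b) / 2"
    unfolding ZD_def by (auto simp: sqrtD_def)
  then have "a + b = 2 * ((a + b) div 2)"
    by presburger
  then have "u = of_int ((a + b) div 2)"
    unfolding u by (metis nonzero_mult_div_cancel_left of_int_add of_int_mult of_int_numeral zero_neq_numeral)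
  then show "u \<in> \<int>" by simp
next
  fix u :: complex
  assume "u \<in> \<int>"
  then obtain n where "u = of_int n" by (auto elim: Ints_cases)
  then have "u = (of_int n + of_int n * sqrtD 1) / 2" by (simp add: sqrtD_def)
  then show "u \<in> ZD 1" unfolding ZD_def by auto
qed

lemma dvdD_1_of_int: "dvdD 1 (of_int m) (of_int n) \<longleftrightarrow> m dvd n"
proof
  assume "dvdD 1 (of_int m) (of_int n)"
  then obtain k where "of_int n = (of_int m * of_int k :: complex)"
    unfolding dvdD_def ZD_1 by (auto elim: Ints_cases)
  then have "n = m * k"
    by (metis of_int_eq_iff of_int_mult)
  then show "m dvd n" ..
next
  assume "m dvd n"
  then obtain k where "n = m * k" ..
  then show "dvdD 1 (of_int m) (of_int n)"
    unfolding dvdD_def ZD_1 by (auto intro!: bexI [of _ "of_int k"])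
qed

lemma unitD_1_of_int: "unitD 1 (of_int m) \<longleftrightarrow> is_unit m"
proof -
  have "unitD 1 (of_int m) \<longleftrightarrow> dvdD 1 (of_int m) (of_int 1)"
    unfolding unitD_def dvdD_def ZD_1 by (metis Ints_of_int of_int_1)
  then show ?thesis
    by (simp only: dvdD_1_of_int)
qed

lemma primeD_1_of_prime:
  fixes p :: int
  assumes "prime p"
  shows "primeD 1 (of_int p)"
  unfolding primeD_def
proof (intro conjI ballI impI)
  fix a b
  assume "a \<in> ZD 1" "b \<in> ZD 1" and "dvdD 1 (of_int p) (a * b)"
  then show "dvdD 1 (of_int p) a \<or> dvdD 1 (of_int p) b"
    using assms unfolding ZD_1
    by (auto elim!: Ints_cases simp: dvdD_1_of_int prime_dvd_mult_iff simp flip: of_int_mult)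
qed (use assms in \<open>auto simp: ZD_1 unitD_1_of_int\<close>)

theorem corollary2p3:
  fixes D p :: int and z :: complex
  assumes "squarefree D"
    and "prime p"
    and "irreducibleD D (of_int p)"
    and "\<not> primeD D (of_int p)"
    and "z \<in> Ip D p"
  shows "CZ D (Amat D p z) \<longleftrightarrow> CZ D (Amat D p (qcnj D z))"
proof -
  have "D \<noteq> 1"
    using assms(2,4) primeD_1_of_prime by blast
  then have "sqrtD D \<notin> \<rat>"
    using assms(1) sqrtD_not_Rats by blast
  moreover have "z \<in> ZD D"
    using assms(5) unfolding Ip_def by blast
  ultimately show ?thesis
    using CZ_Amat_qcnj_iff by blast
qed

end
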